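(* Let $n>5$, let $G_R=(V,E_R)$ be an undirected (unweighted) connected graph of order $n$ such that $w^R_{xy}/w^R_{yx}\le c$ for every $(x,y)\in E_R$, and let $G_M=(V,E_M)$ be the clique of order $n$. If $r\ge 2c\left(1+\frac{2}{n-5}\right)$, then for every $S\subseteq V$ the absorption time $\tau$ of the two-graph Moran process with resident graph $G_R$ and mutant graph $G_M$ satisfies $$\mathbb{E}[\tau\mid X_0=S]\le\frac{r}{r-c}\,n\,(n-|S|).$$ In particular, $\mathbb{E}[\tau]\le\frac{r}{r-c}n^2$.
   Context: Two-graph Moran process: vertex set $V=\{1,\dots,n\}$; resident graph $G_R=(V,E_R)$ and mutant graph $G_M=(V,E_M)$ with row-stochastic weight matrices $W_R=[w^R_{ij}]$, $W_M=[w^M_{ij}]$ ($w^R_{ij}>0$ iff $(i,j)\in E_R$, similarly for $M$). The state $X_t$ at time $t$ is the mutant set; residents have fitness $1$, mutants fitness $r>0$. Each step a vertex $i$ is chosen with probability proportional to fitness; if $i$ is a mutant, it picks $j$ with probability $w^M_{ij}$ and $j$ becomes a mutant; if a resident, it picks $j$ with probability $w^R_{ij}$ and $j$ becomes a resident. The absorption time is $\tau=\min\{t: X_t\in\{\emptyset,V\}\}$. In $\mathbb{E}[\tau]$ (without conditioning), $X_0$ is a single mutant at a uniformly random vertex. Undirected graphs are unweighted: $w_{xy}=1/\deg(x)$ for neighbours $y$ of $x$, so $w^R_{xy}/w^R_{yx}=\deg(y)/\deg(x)$; for the clique $w^M_{xy}=1/(n-1)$. *)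

theory Defs
  imports "HOL-Analysis.Analysis"
begin

text \<open>Vertex set V = {..<n} (a relabelling of {1,...,n}). The resident graph is a
simple undirected graph given by a symmetric irreflexive relation E on V.\<close>

definition vset :: "nat \<Rightarrow> nat set" where
  "vset n = {..<n}"

definition undirected_graph_on :: "nat \<Rightarrow> (nat \<Rightarrow> nat \<Rightarrow> bool) \<Rightarrow> bool" where
  "undirected_graph_on n E \<longleftrightarrow>
     (\<forall>x y. E x y \<longrightarrow> x \<in> vset n \<and> y \<in> vset n) \<and>
     (\<forall>x y. E x y \<longrightarrow> E y x) \<and> (\<forall>x. \<not> E x x)"

definition connected_graph :: "nat \<Rightarrow> (nat \<Rightarrow> nat \<Rightarrow> bool) \<Rightarrow> bool" where
  "connected_graph n E \<longleftrightarrow> (\<forall>x\<in>vset n. \<forall>y\<in>vset n. E\<^sup>*\<^sup>* x y)"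

definition deg :: "nat \<Rightarrow> (nat \<Rightarrow> nat \<Rightarrow> bool) \<Rightarrow> nat \<Rightarrow> nat" where
  "deg n E x = card {y \<in> vset n. E x y}"

definition wR :: "nat \<Rightarrow> (nat \<Rightarrow> nat \<Rightarrow> bool) \<Rightarrow> nat \<Rightarrow> nat \<Rightarrow> real" where
  "wR n E x y = (if E x y then 1 / real (deg n E x) else 0)"

definition wM :: "nat \<Rightarrow> nat \<Rightarrow> nat \<Rightarrow> real" where
  "wM n x y = (if x \<noteq> y then 1 / (real n - 1) else 0)"

definition fitness :: "real \<Rightarrow> nat set \<Rightarrow> nat \<Rightarrow> real" where
  "fitness r S i = (if i \<in> S then r else 1)"

definition trans_prob ::
  "nat \<Rightarrow> (nat \<Rightarrow> nat \<Rightarrow> real) \<Rightarrow> (nat \<Rightarrow> nat \<Rightarrow> real) \<Rightarrow> real \<Rightarrow> nat set \<Rightarrow> nat set \<Rightarrow> real" where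
  "trans_prob n WR WM r S T =
     (\<Sum>i\<in>vset n. \<Sum>j\<in>vset n.
        fitness r S i / (\<Sum>k\<in>vset n. fitness r S k) *
        (if i \<in> S then WM i j else WR i j) *
        (if (if i \<in> S then insert j S else S - {j}) = T then 1 else 0))"

text \<open>Distribution of X_t given X_0 = S: state_dist ... S t T = P(X_t = T | X_0 = S).\<close>
primrec state_dist ::
  "nat \<Rightarrow> (nat \<Rightarrow> nat \<Rightarrow> real) \<Rightarrow> (nat \<Rightarrow> nat \<Rightarrow> real) \<Rightarrow> real \<Rightarrow> nat set \<Rightarrow> nat \<Rightarrow> nat set \<Rightarrow> real" where
  "state_dist n WR WM r S 0 T = (if T = S then 1 else 0)"
| "state_dist n WR WM r S (Suc t) T =
     (\<Sum>U\<in>Pow (vset n). state_dist n WR WM r S t U * trans_prob n WR WM r U T)"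

text \<open>E[tau | X_0 = S] = sum over t of P(tau > t) = sum over t of P(X_t \<notin> {\<emptyset>, V})
  (the states \<emptyset> and V are absorbing), as an extended nonnegative real.\<close>
definition exp_abs_time ::
  "nat \<Rightarrow> (nat \<Rightarrow> nat \<Rightarrow> real) \<Rightarrow> (nat \<Rightarrow> nat \<Rightarrow> real) \<Rightarrow> real \<Rightarrow> nat set \<Rightarrow> ennreal" where
  "exp_abs_time n WR WM r S =
     (\<Sum>t. ennreal (\<Sum>T\<in>Pow (vset n) - {{}, vset n}. state_dist n WR WM r S t T))"

text \<open>Unconditioned E[tau]: X_0 a single mutant at a uniformly random vertex.\<close>
definition exp_abs_time_uniform ::
  "nat \<Rightarrow> (nat \<Rightarrow> nat \<Rightarrow> real) \<Rightarrow> (nat \<Rightarrow> nat \<Rightarrow> real) \<Rightarrow> real \<Rightarrow> ennreal" where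
  "exp_abs_time_uniform n WR WM r =
     (\<Sum>v\<in>vset n. exp_abs_time n WR WM r {v}) / ennreal (real n)"

end

theory Submission
  imports Defs
begin

text \<open>The number of residents n - |X_t| is a nonnegative potential which, as long as the
  process is not absorbed, decreases in expectation by at least (r - c)/(r n) per step; summing
  this drift over time bounds E[\<tau> | X_0 = S] by (n - |S|) r n/(r - c).
  In a state with k mutants the total fitness is at most r n, mutants invade residents with total
  weight r k (n - k)/(n - 1) on the clique, and residents invade mutants with total weight at most
  min (c k) (n - k), by the row sums of W_R and w_xy \<le> c w_yx. The threshold on r is
  what makes the difference of these two flows at least r - c.\<close>

section \<open>Absorption time from a potential with drift\<close>

lemma finite_vset [simp]: "finite (vset n)"
  by (simp add: vset_def)

definition total_fitness :: "nat \<Rightarrow> real \<Rightarrow> nat set \<Rightarrow> real" where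
  "total_fitness n r U = (\<Sum>k\<in>vset n. fitness r U k)"

definition moran_step :: "nat set \<Rightarrow> nat \<Rightarrow> nat \<Rightarrow> nat set" where
  "moran_step U i j = (if i \<in> U then insert j U else U - {j})"

definition step_expectation ::
  "nat \<Rightarrow> (nat \<Rightarrow> nat \<Rightarrow> real) \<Rightarrow> (nat \<Rightarrow> nat \<Rightarrow> real) \<Rightarrow> real \<Rightarrow> nat set \<Rightarrow> (nat set \<Rightarrow> real) \<Rightarrow> real"
where
  "step_expectation n WR WM r U g = (\<Sum>i\<in>vset n. \<Sum>j\<in>vset n.
     fitness r U i / total_fitness n r U * (if i \<in> U then WM i j else WR i j) * g (moran_step U i j))"

definition survival_prob ::
  "nat \<Rightarrow> (nat \<Rightarrow> nat \<Rightarrow> real) \<Rightarrow> (nat \<Rightarrow> nat \<Rightarrow> real) \<Rightarrow> real \<Rightarrow> nat set \<Rightarrow> nat \<Rightarrow> real" where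
  "survival_prob n WR WM r S t = (\<Sum>T\<in>Pow (vset n) - {{}, vset n}. state_dist n WR WM r S t T)"

lemma sum_trans_prob_mult:
  assumes "U \<subseteq> vset n"
  shows "(\<Sum>T\<in>Pow (vset n). trans_prob n WR WM r U T * g T) = step_expectation n WR WM r U g"
proof -
  define a where "a i j = fitness r U i / total_fitness n r U * (if i \<in> U then WM i j else WR i j)" for i j
  have "(\<Sum>T\<in>Pow (vset n). trans_prob n WR WM r U T * g T)
      = (\<Sum>T\<in>Pow (vset n). \<Sum>i\<in>vset n. \<Sum>j\<in>vset n. a i j * (if moran_step U i j = T then g T else 0))"
    unfolding trans_prob_def sum_distrib_right
    by (intro sum.cong refl) (auto simp: a_def moran_step_def total_fitness_def)
  also have "\<dots> = (\<Sum>i\<in>vset n. \<Sum>j\<in>vset n. \<Sum>T\<in>Pow (vset n). a i j * (if moran_step U i j = T then g T else 0))"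
    by (subst sum.swap, rule sum.cong, simp, rule sum.swap)
  also have "\<dots> = (\<Sum>i\<in>vset n. \<Sum>j\<in>vset n. a i j * g (moran_step U i j))"
  proof (intro sum.cong refl)
    fix i j assume "j \<in> vset n"
    then have "moran_step U i j \<in> Pow (vset n)"
      using assms by (auto simp: moran_step_def)
    then show "(\<Sum>T\<in>Pow (vset n). a i j * (if moran_step U i j = T then g T else 0)) = a i j * g (moran_step U i j)"
      by (simp add: sum_distrib_left[symmetric])
  qed
  finally show ?thesis
    by (simp add: a_def step_expectation_def)
qed

lemma sum_state_dist_Suc_mult:
  "(\<Sum>T\<in>Pow (vset n). state_dist n WR WM r S (Suc t) T * g T)
   = (\<Sum>U\<in>Pow (vset n). state_dist n WR WM r S t U * step_expectation n WR WM r U g)"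
proof -
  have "(\<Sum>T\<in>Pow (vset n). state_dist n WR WM r S (Suc t) T * g T)
      = (\<Sum>T\<in>Pow (vset n). \<Sum>U\<in>Pow (vset n). state_dist n WR WM r S t U * (trans_prob n WR WM r U T * g T))"
    by (intro sum.cong refl) (simp add: sum_distrib_left sum_distrib_right mult_ac)
  also have "\<dots> = (\<Sum>U\<in>Pow (vset n). state_dist n WR WM r S t U * (\<Sum>T\<in>Pow (vset n). trans_prob n WR WM r U T * g T))"
    by (subst sum.swap) (simp add: sum_distrib_left)
  finally show ?thesis
    by (simp add: sum_trans_prob_mult)
qed

lemma state_dist_nonneg:
  assumes "r > 0" "\<And>i j. WR i j \<ge> 0" "\<And>i j. WM i j \<ge> 0"
  shows "state_dist n WR WM r S t T \<ge> 0"
proof (induction t arbitrary: T)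
  case (Suc t)
  have "trans_prob n WR WM r U T \<ge> 0" for U T
    unfolding trans_prob_def using assms
    by (intro sum_nonneg) (auto simp: fitness_def intro!: mult_nonneg_nonneg divide_nonneg_nonneg sum_nonneg)
  then show ?case
    using Suc by (auto intro!: sum_nonneg)
qed simp

lemma survival_prob_eq_sum:
  "survival_prob n WR WM r S t
   = (\<Sum>U\<in>Pow (vset n). state_dist n WR WM r S t U * of_bool (U \<notin> {{}, vset n}))"
  unfolding survival_prob_def by (auto intro: sum.cong)

lemma sum_survival_prob_le_potential:
  assumes S: "S \<subseteq> vset n"
    and dist_nonneg: "\<And>t T. state_dist n WR WM r S t T \<ge> 0"
    and phi_nonneg: "\<And>T. T \<subseteq> vset n \<Longrightarrow> phi T \<ge> 0"
    and drift: "\<And>U. U \<subseteq> vset n \<Longrightarrow>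
        step_expectation n WR WM r U phi \<le> phi U - d * of_bool (U \<notin> {{}, vset n})"
  shows "d * (\<Sum>t<N. survival_prob n WR WM r S t) \<le> phi S"
proof -
  define Phi where "Phi t = (\<Sum>T\<in>Pow (vset n). state_dist n WR WM r S t T * phi T)" for t
  have Phi_Suc: "Phi (Suc t) \<le> Phi t - d * survival_prob n WR WM r S t" for t
  proof -
    have "Phi (Suc t) = (\<Sum>U\<in>Pow (vset n). state_dist n WR WM r S t U * step_expectation n WR WM r U phi)"
      unfolding Phi_def by (rule sum_state_dist_Suc_mult)
    also have "\<dots> \<le> (\<Sum>U\<in>Pow (vset n). state_dist n WR WM r S t U * (phi U - d * of_bool (U \<notin> {{}, vset n})))"
      by (intro sum_mono mult_left_mono drift dist_nonneg) auto
    also have "\<dots> = Phi t - d * survival_prob n WR WM r S t"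
      unfolding Phi_def survival_prob_eq_sum
      by (simp add: right_diff_distrib sum_subtractf sum_distrib_left mult.left_commute
          del: sum_mult_of_bool_eq)
    finally show ?thesis .
  qed
  have "d * (\<Sum>t<N. survival_prob n WR WM r S t) \<le> Phi 0 - Phi N"
  proof (induction N)
    case (Suc N)
    then show ?case
      using Phi_Suc[of N] by (simp add: distrib_left)
  qed simp
  moreover have "Phi N \<ge> 0"
    unfolding Phi_def by (intro sum_nonneg mult_nonneg_nonneg dist_nonneg phi_nonneg) auto
  moreover have "Phi 0 = phi S"
  proof -
    have "Phi 0 = (\<Sum>T\<in>Pow (vset n). if T = S then phi T else 0)"
      unfolding Phi_def by (rule sum.cong) auto
    then show ?thesis
      using S by simp
  qed
  ultimately show ?thesis
    by linarith
qed

lemma exp_abs_time_le_potential_drift: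
  assumes S: "S \<subseteq> vset n" and "d > 0"
    and "\<And>t T. state_dist n WR WM r S t T \<ge> 0"
    and "\<And>T. T \<subseteq> vset n \<Longrightarrow> phi T \<ge> 0"
    and "\<And>U. U \<subseteq> vset n \<Longrightarrow>
        step_expectation n WR WM r U phi \<le> phi U - d * of_bool (U \<notin> {{}, vset n})"
  shows "exp_abs_time n WR WM r S \<le> ennreal (phi S / d)"
proof -
  have survival_nonneg: "survival_prob n WR WM r S t \<ge> 0" for t
    unfolding survival_prob_def using assms(3) by (intro sum_nonneg)
  have "(\<Sum>t<N. ennreal (survival_prob n WR WM r S t)) \<le> ennreal (phi S / d)" for N
  proof -
    have "(\<Sum>t<N. survival_prob n WR WM r S t) \<le> phi S / d"
      using sum_survival_prob_le_potential[OF assms(1,3,4,5), of N] \<open>d > 0\<close>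
      by (simp add: le_divide_eq mult.commute)
    then show ?thesis
      using survival_nonneg by (simp add: ennreal_leI)
  qed
  then show ?thesis
    unfolding exp_abs_time_def survival_prob_def[symmetric]
    by (intro suminf_le_const summableI)
qed

lemma exp_abs_time_uniform_le:
  assumes "n > 0" "\<And>v. v \<in> vset n \<Longrightarrow> exp_abs_time n WR WM r {v} \<le> ennreal B"
  shows "exp_abs_time_uniform n WR WM r \<le> ennreal B"
proof -
  have "(\<Sum>v\<in>vset n. exp_abs_time n WR WM r {v}) \<le> (\<Sum>v\<in>vset n. ennreal B)"
    using assms(2) by (rule sum_mono)
  also have "\<dots> = ennreal (real n) * ennreal B"
    by (simp add: vset_def ennreal_of_nat_eq_real_of_nat)
  finally show ?thesis
    unfolding exp_abs_time_uniform_def using assms(1)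
    by (intro divide_le_posI_ennreal) auto
qed

section \<open>The number of residents\<close>

definition resident_count :: "nat \<Rightarrow> nat set \<Rightarrow> real" where
  "resident_count n T = real n - real (card T)"

lemma resident_count_moran_step:
  assumes "finite U"
  shows "resident_count n (moran_step U i j)
       = resident_count n U - of_bool (i \<in> U \<and> j \<notin> U) + of_bool (i \<notin> U \<and> j \<in> U)"
proof -
  have "real (card (U - {j})) = real (card U) - 1" if "j \<in> U"
    using card_Suc_Diff1[OF assms that] by linarith
  then show ?thesis
    using assms by (auto simp: resident_count_def moran_step_def insert_absorb)
qed

lemma total_fitness_eq:
  assumes "U \<subseteq> vset n"
  shows "total_fitness n r U = r * card U + (real n - card U)"
proof -
  have "finite U"
    using finite_subset[OF assms] by simp
  moreover have "card U \<le> n"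
    using card_mono[OF finite_vset assms] by (simp add: vset_def)
  ultimately have "real (card (vset n - U)) = real n - real (card U)"
    using assms by (simp add: card_Diff_subset vset_def of_nat_diff)
  moreover have "vset n \<inter> U = U" "vset n \<inter> - U = vset n - U"
    using assms by auto
  ultimately show ?thesis
    unfolding total_fitness_def fitness_def by (simp add: sum.If_cases)
qed

lemma total_fitness_pos:
  assumes "r > 0" "n > 0"
  shows "total_fitness n r U > 0"
  unfolding total_fitness_def fitness_def
  using assms by (intro sum_pos) (auto simp: vset_def)

lemma sum_sum_of_bool_mem:
  fixes f :: "'a \<Rightarrow> 'a \<Rightarrow> 'b::comm_semiring_1"
  assumes "finite V" "A \<subseteq> V" "B \<subseteq> V"
  shows "(\<Sum>i\<in>V. \<Sum>j\<in>V. f i j * of_bool (i \<in> A \<and> j \<in> B)) = (\<Sum>i\<in>A. \<Sum>j\<in>B. f i j)"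
proof -
  have "(\<Sum>i\<in>V. \<Sum>j\<in>V. f i j * of_bool (i \<in> A \<and> j \<in> B))
      = (\<Sum>i\<in>V. of_bool (i \<in> A) * (\<Sum>j\<in>V. f i j * of_bool (j \<in> B)))"
    by (intro sum.cong) (auto simp del: sum_mult_of_bool_eq)
  also have "\<dots> = (\<Sum>i\<in>A. \<Sum>j\<in>B. f i j)"
    using assms by (simp add: Int_absorb1 Int_absorb2)
  finally show ?thesis .
qed

lemma step_expectation_resident_count:
  fixes r :: real
  assumes U: "U \<subseteq> vset n"
  defines "F \<equiv> total_fitness n r U"
  shows "step_expectation n WR WM r U (resident_count n)
       = resident_count n U * (\<Sum>i\<in>vset n. \<Sum>j\<in>vset n. fitness r U i / F * (if i \<in> U then WM i j else WR i j))
         - r / F * (\<Sum>i\<in>U. \<Sum>j\<in>vset n - U. WM i j)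
         + 1 / F * (\<Sum>i\<in>vset n - U. \<Sum>j\<in>U. WR i j)"
proof -
  define a where "a i j = fitness r U i / F * (if i \<in> U then WM i j else WR i j)" for i j
  have "finite U"
    using finite_subset[OF U] by simp
  have "a i j * resident_count n (moran_step U i j)
      = resident_count n U * a i j
        - a i j * of_bool (i \<in> U \<and> j \<in> vset n - U) + a i j * of_bool (i \<in> vset n - U \<and> j \<in> U)"
    if "i \<in> vset n" "j \<in> vset n" for i j
    using that by (simp add: resident_count_moran_step[OF \<open>finite U\<close>] algebra_simps)
  then have "step_expectation n WR WM r U (resident_count n)
      = (\<Sum>i\<in>vset n. \<Sum>j\<in>vset n. resident_count n U * a i j
          - a i j * of_bool (i \<in> U \<and> j \<in> vset n - U) + a i j * of_bool (i \<in> vset n - U \<and> j \<in> U))"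
    unfolding step_expectation_def F_def[symmetric] a_def[symmetric] by (intro sum.cong refl) simp
  also have "\<dots> = resident_count n U * (\<Sum>i\<in>vset n. \<Sum>j\<in>vset n. a i j)
      - (\<Sum>i\<in>vset n. \<Sum>j\<in>vset n. a i j * of_bool (i \<in> U \<and> j \<in> vset n - U))
      + (\<Sum>i\<in>vset n. \<Sum>j\<in>vset n. a i j * of_bool (i \<in> vset n - U \<and> j \<in> U))"
    by (simp only: sum.distrib sum_subtractf sum_distrib_left)
  also have "\<dots> = resident_count n U * (\<Sum>i\<in>vset n. \<Sum>j\<in>vset n. a i j)
      - (\<Sum>i\<in>U. \<Sum>j\<in>vset n - U. a i j) + (\<Sum>i\<in>vset n - U. \<Sum>j\<in>U. a i j)"
    using U by (simp only: sum_sum_of_bool_mem finite_vset Diff_subset)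
  finally show ?thesis
    by (simp add: a_def fitness_def sum_distrib_left)
qed

lemma transition_weight_le_1:
  assumes "r > 0" "n > 0"
    and "\<And>i. i \<in> vset n \<Longrightarrow> (\<Sum>j\<in>vset n. WR i j) \<le> 1"
    and "\<And>i. i \<in> vset n \<Longrightarrow> (\<Sum>j\<in>vset n. WM i j) \<le> 1"
  shows "(\<Sum>i\<in>vset n. \<Sum>j\<in>vset n. fitness r U i / total_fitness n r U * (if i \<in> U then WM i j else WR i j)) \<le> 1"
proof -
  have F: "total_fitness n r U > 0"
    using assms(1,2) by (rule total_fitness_pos)
  have "(\<Sum>i\<in>vset n. \<Sum>j\<in>vset n. fitness r U i / total_fitness n r U * (if i \<in> U then WM i j else WR i j))
      = (\<Sum>i\<in>vset n. fitness r U i / total_fitness n r U * (\<Sum>j\<in>vset n. if i \<in> U then WM i j else WR i j))"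
    by (simp add: sum_distrib_left)
  also have "\<dots> \<le> (\<Sum>i\<in>vset n. fitness r U i / total_fitness n r U)"
  proof (intro sum_mono mult_left_le)
    fix i assume "i \<in> vset n"
    then show "(\<Sum>j\<in>vset n. if i \<in> U then WM i j else WR i j) \<le> 1"
      using assms(3,4) by (cases "i \<in> U") auto
    show "fitness r U i / total_fitness n r U \<ge> 0"
      using assms(1) F by (simp add: fitness_def)
  qed
  also have "\<dots> = 1"
    using F by (simp add: total_fitness_def flip: sum_divide_distrib)
  finally show ?thesis .
qed

lemma step_expectation_resident_count_le:
  assumes "U \<subseteq> vset n" "r > 0" "n > 0"
    and "\<And>i. i \<in> vset n \<Longrightarrow> (\<Sum>j\<in>vset n. WR i j) \<le> 1"
    and "\<And>i. i \<in> vset n \<Longrightarrow> (\<Sum>j\<in>vset n. WM i j) \<le> 1"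
  shows "step_expectation n WR WM r U (resident_count n)
       \<le> resident_count n U
         - (r * (\<Sum>i\<in>U. \<Sum>j\<in>vset n - U. WM i j) - (\<Sum>i\<in>vset n - U. \<Sum>j\<in>U. WR i j))
           / total_fitness n r U"
proof -
  have "resident_count n U \<ge> 0"
    using card_mono[OF finite_vset assms(1)] by (simp add: resident_count_def vset_def)
  then have "resident_count n U
      * (\<Sum>i\<in>vset n. \<Sum>j\<in>vset n. fitness r U i / total_fitness n r U * (if i \<in> U then WM i j else WR i j))
      \<le> resident_count n U"
    using transition_weight_le_1[of r n WR WM U] assms(2-5) by (simp add: mult_left_le)
  then show ?thesis
    unfolding step_expectation_resident_count[OF assms(1)] by (simp add: diff_divide_distrib)
qed

section \<open>Weights of the clique and of the resident graph\<close>

lemma wM_row_sum: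
  assumes "n \<ge> 2" "i \<in> vset n"
  shows "(\<Sum>j\<in>vset n. wM n i j) = 1"
proof -
  have "(\<Sum>j\<in>vset n. wM n i j) = (\<Sum>j\<in>vset n - {i}. 1 / (real n - 1))"
    by (rule sum.mono_neutral_cong_right) (auto simp: wM_def)
  also have "\<dots> = 1"
    using assms by (simp add: vset_def of_nat_diff)
  finally show ?thesis .
qed

lemma wM_cut_sum:
  assumes "U \<subseteq> vset n"
  shows "(\<Sum>i\<in>U. \<Sum>j\<in>vset n - U. wM n i j) = real (card U) * (real n - card U) / (real n - 1)"
proof -
  have "finite U" "card U \<le> n"
    using finite_subset[OF assms] card_mono[OF finite_vset assms] by (auto simp: vset_def)
  moreover have "(\<Sum>i\<in>U. \<Sum>j\<in>vset n - U. wM n i j) = (\<Sum>i\<in>U. \<Sum>j\<in>vset n - U. 1 / (real n - 1))"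
    by (intro sum.cong) (auto simp: wM_def)
  ultimately show ?thesis
    using assms by (simp add: card_Diff_subset vset_def of_nat_diff)
qed

lemma wR_nonneg: "wR n E i j \<ge> 0"
  by (simp add: wR_def)

lemma wR_row_sum_le_1: "(\<Sum>j\<in>vset n. wR n E i j) \<le> 1"
proof -
  have "(\<Sum>j\<in>vset n. wR n E i j) = real (deg n E i) * (1 / real (deg n E i))"
    by (simp add: wR_def sum.If_cases deg_def Int_def)
  also have "\<dots> \<le> 1"
    by (cases "deg n E i = 0") auto
  finally show ?thesis .
qed

lemma wR_pos:
  assumes "undirected_graph_on n E" "E x y"
  shows "wR n E x y > 0"
proof -
  have "y \<in> {y \<in> vset n. E x y}"
    using assms unfolding undirected_graph_on_def by auto
  then have "deg n E x > 0"
    unfolding deg_def by (auto simp: card_gt_0_iff)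
  then show ?thesis
    using assms(2) by (simp add: wR_def)
qed

lemma wR_le_ratio_mult:
  assumes "undirected_graph_on n E" "\<forall>x y. E x y \<longrightarrow> wR n E x y / wR n E y x \<le> c"
  shows "wR n E x y \<le> c * wR n E y x"
proof (cases "E x y")
  case True
  then have "wR n E y x > 0"
    using assms(1) by (intro wR_pos) (auto simp: undirected_graph_on_def)
  then show ?thesis
    using assms(2) True by (simp add: divide_le_eq)
next
  case False
  then have "\<not> E y x"
    using assms(1) by (auto simp: undirected_graph_on_def)
  then show ?thesis
    using False by (simp add: wR_def)
qed

lemma ratio_bound_ge_1:
  assumes "undirected_graph_on n E" "E x y" "\<forall>x y. E x y \<longrightarrow> wR n E x y / wR n E y x \<le> c"
  shows "1 \<le> c"
proof -
  have "E y x"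
    using assms(1,2) by (auto simp: undirected_graph_on_def)
  then have "wR n E x y > 0" "wR n E y x > 0"
    using assms(1,2) wR_pos by blast+
  then have "1 \<le> wR n E x y / wR n E y x \<or> 1 \<le> wR n E y x / wR n E x y"
    by (auto simp: le_divide_eq)
  moreover have "wR n E x y / wR n E y x \<le> c" "wR n E y x / wR n E x y \<le> c"
    using assms(2,3) \<open>E y x\<close> by blast+
  ultimately show ?thesis
    by linarith
qed

lemma connected_graph_has_edge:
  assumes "connected_graph n E" "n \<ge> 2"
  obtains y where "E 0 y"
proof -
  have "E\<^sup>*\<^sup>* 0 1"
    using assms by (simp add: connected_graph_def vset_def)
  then show ?thesis
    using that by (metis converse_rtranclpE zero_neq_one)
qed

lemma cut_sum_le_card_source:
  fixes W :: "'a \<Rightarrow> 'a \<Rightarrow> real"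
  assumes "finite V" "B \<subseteq> V" "\<And>i j. W i j \<ge> 0" "\<And>i. i \<in> A \<Longrightarrow> (\<Sum>j\<in>V. W i j) \<le> 1"
  shows "(\<Sum>i\<in>A. \<Sum>j\<in>B. W i j) \<le> card A"
proof -
  have "(\<Sum>i\<in>A. \<Sum>j\<in>B. W i j) \<le> (\<Sum>i\<in>A. \<Sum>j\<in>V. W i j)"
    using assms by (intro sum_mono sum_mono2) auto
  also have "\<dots> \<le> (\<Sum>i\<in>A. 1)"
    using assms(4) by (rule sum_mono)
  finally show ?thesis
    by simp
qed

lemma cut_sum_le_ratio_card_target:
  fixes W :: "'a \<Rightarrow> 'a \<Rightarrow> real"
  assumes "finite V" "A \<subseteq> V" "c \<ge> 0" "\<And>i j. W i j \<ge> 0" "\<And>i. i \<in> B \<Longrightarrow> (\<Sum>j\<in>V. W i j) \<le> 1"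
    and "\<And>i j. W i j \<le> c * W j i"
  shows "(\<Sum>i\<in>A. \<Sum>j\<in>B. W i j) \<le> c * card B"
proof -
  have "(\<Sum>i\<in>A. \<Sum>j\<in>B. W i j) \<le> (\<Sum>i\<in>A. \<Sum>j\<in>B. c * W j i)"
    by (intro sum_mono assms(6))
  also have "\<dots> = c * (\<Sum>j\<in>B. \<Sum>i\<in>A. W j i)"
    by (subst sum.swap) (simp add: sum_distrib_left)
  also have "\<dots> \<le> c * card B"
    using cut_sum_le_card_source[OF assms(1,2,4,5)] assms(3) by (rule mult_left_mono)
  finally show ?thesis .
qed

section \<open>Drift of the number of residents\<close>

lemma larger_part_bound:
  fixes k m c r :: real
  assumes "1 \<le> k" "k \<le> m" "k + m > 5" "0 \<le> c" "r \<ge> 2 * c * (1 + 2 / (k + m - 5))"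
  shows "c * (k + m - 1) \<le> r * (m - 1)"
proof -
  define N where "N = k + m"
  have N: "N > 5"
    using assms(3) by (simp add: N_def)
  have "2 * c * (1 + 2 / (N - 5)) = 2 * c * (N - 3) / (N - 5)"
    using N by (simp add: field_simps)
  then have r: "2 * c * (N - 3) \<le> r * (N - 5)"
    using assms(5) N by (simp add: N_def pos_divide_le_eq)
  have "r \<ge> 0"
    using r N assms(4) by (smt (verit) mult_nonneg_nonneg zero_le_mult_iff)
  have "2 * c * (N - 3) * (N - 2) - 2 * c * (N - 1) * (N - 5) = 2 * c * (N + 1)"
    by (simp add: algebra_simps)
  then have "2 * c * (N - 1) * (N - 5) \<le> 2 * c * (N - 3) * (N - 2)"
    using assms(4) N by (smt (verit) mult_nonneg_nonneg)
  also have "\<dots> \<le> r * (N - 5) * (N - 2)"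
    using r N by (intro mult_right_mono) auto
  also have "\<dots> \<le> r * (N - 5) * (2 * (m - 1))"
    using \<open>r \<ge> 0\<close> N assms(2) by (intro mult_left_mono) (auto simp: N_def)
  finally have "(c * (N - 1)) * (2 * (N - 5)) \<le> (r * (m - 1)) * (2 * (N - 5))"
    by (simp add: algebra_simps)
  then show ?thesis
    using N by (simp add: N_def)
qed

lemma cut_flow_inequality:
  fixes k m c r L :: real
  assumes "1 \<le> k" "1 \<le> m" "k + m > 5" "1 \<le> c" "r \<ge> 2 * c * (1 + 2 / (k + m - 5))"
    and "L \<le> c * k" "L \<le> m"
  shows "r - c \<le> r * k * m / (k + m - 1) - L"
proof -
  have "r * k * m / (k + m - 1) = r + r * (k - 1) * (m - 1) / (k + m - 1)"
    using assms(3) by (simp add: field_simps)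
  moreover have "L - c \<le> r * (k - 1) * (m - 1) / (k + m - 1)"
  proof (cases "k \<le> m")
    case True
    then have "c \<le> r * (m - 1) / (k + m - 1)"
      using larger_part_bound[of k m c r] assms by (simp add: le_divide_eq)
    then have "c * (k - 1) \<le> r * (m - 1) / (k + m - 1) * (k - 1)"
      using assms(1) by (intro mult_right_mono) auto
    then have "c * (k - 1) \<le> r * (k - 1) * (m - 1) / (k + m - 1)"
      by (simp add: mult_ac)
    then show ?thesis
      using assms(6) by (simp add: algebra_simps)
  next
    case False
    then have "c \<le> r * (k - 1) / (m + k - 1)"
      using larger_part_bound[of m k c r] assms by (simp add: le_divide_eq add.commute)
    then have "c * (m - 1) \<le> r * (k - 1) / (m + k - 1) * (m - 1)"
      using assms(2) by (intro mult_right_mono) auto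
    then have "c * (m - 1) \<le> r * (k - 1) * (m - 1) / (k + m - 1)"
      by (simp add: mult_ac add.commute)
    moreover have "m \<le> c * m"
      using assms(2,4) by simp
    ultimately show ?thesis
      using assms(7) by (simp add: right_diff_distrib)
  qed
  ultimately show ?thesis
    by linarith
qed

lemma resident_count_drift:
  assumes n: "n > 5" and graph: "undirected_graph_on n E"
    and ratio: "\<forall>x y. E x y \<longrightarrow> wR n E x y / wR n E y x \<le> c"
    and c: "1 \<le> c" and r: "r \<ge> 2 * c * (1 + 2 / (real n - 5))" and "c < r"
    and U: "U \<subseteq> vset n"
  shows "step_expectation n (wR n E) (wM n) r U (resident_count n)
       \<le> resident_count n U - (r - c) / (r * n) * of_bool (U \<notin> {{}, vset n})"
proof -
  define k where "k = real (card U)"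
  define G where "G = (\<Sum>i\<in>U. \<Sum>j\<in>vset n - U. wM n i j)"
  define L where "L = (\<Sum>i\<in>vset n - U. \<Sum>j\<in>U. wR n E i j)"
  define F where "F = total_fitness n r U"
  have "r > 0"
    using \<open>c < r\<close> c by linarith
  have drift: "step_expectation n (wR n E) (wM n) r U (resident_count n)
      \<le> resident_count n U - (r * G - L) / F"
    unfolding G_def L_def F_def
    using U \<open>r > 0\<close> n wR_row_sum_le_1 wM_row_sum
    by (intro step_expectation_resident_count_le) auto
  show ?thesis
  proof (cases "U \<in> {{}, vset n}")
    case True
    then have "G = 0" "L = 0"
      by (auto simp: G_def L_def)
    then show ?thesis
      using drift True by simp
  next
    case False
    have "finite U" "card U \<le> n"
      using finite_subset[OF U] card_mono[OF finite_vset U] by (auto simp: vset_def)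
    moreover have "card U \<noteq> n"
      using False card_subset_eq[OF finite_vset U] by (auto simp: vset_def)
    ultimately have k: "1 \<le> k" "1 \<le> real n - k"
      using False by (auto simp: k_def card_gt_0_iff Suc_le_eq)
    have "L \<le> real (card (vset n - U))"
      unfolding L_def using wR_row_sum_le_1 wR_nonneg U by (intro cut_sum_le_card_source) auto
    also have "\<dots> = real n - k"
      using \<open>finite U\<close> \<open>card U \<le> n\<close> U by (simp add: k_def card_Diff_subset vset_def of_nat_diff)
    finally have "L \<le> real n - k" .
    moreover have "L \<le> c * k"
      unfolding L_def k_def using c wR_nonneg wR_row_sum_le_1 wR_le_ratio_mult[OF graph ratio]
      by (intro cut_sum_le_ratio_card_target[where V = "vset n"]) auto
    moreover have "G = k * (real n - k) / (real n - 1)"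
      unfolding G_def k_def by (rule wM_cut_sum[OF U])
    ultimately have flow: "r - c \<le> r * G - L"
      using cut_flow_inequality[of k "real n - k" c r L] k n r c by (simp add: mult.assoc)
    have "real n - k \<le> r * (real n - k)"
      using k \<open>c < r\<close> c by simp
    then have "F \<le> r * n"
      using total_fitness_eq[of U n r] U by (simp add: F_def k_def algebra_simps)
    moreover have "F > 0"
      unfolding F_def using \<open>r > 0\<close> n by (intro total_fitness_pos) auto
    ultimately have "(r - c) / (r * n) \<le> (r * G - L) / F"
      using flow \<open>c < r\<close> by (intro frac_le) auto
    then show ?thesis
      using drift False by simp
  qed
qed

lemma exp_abs_time_le:
  assumes "n > 5" "undirected_graph_on n E" "\<forall>x y. E x y \<longrightarrow> wR n E x y / wR n E y x \<le> c"
    and "1 \<le> c" "r \<ge> 2 * c * (1 + 2 / (real n - 5))" "c < r" and S: "S \<subseteq> vset n"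
  shows "exp_abs_time n (wR n E) (wM n) r S \<le> ennreal (r / (r - c) * real n * (real n - real (card S)))"
proof -
  have "exp_abs_time n (wR n E) (wM n) r S \<le> ennreal (resident_count n S / ((r - c) / (r * n)))"
  proof (rule exp_abs_time_le_potential_drift[OF S])
    show "(r - c) / (r * n) > 0"
      using assms(1,4,6) by simp
    show "state_dist n (wR n E) (wM n) r S t T \<ge> 0" for t T
      using assms(1,4,6) by (intro state_dist_nonneg) (auto simp: wR_def wM_def)
    show "resident_count n T \<ge> 0" if "T \<subseteq> vset n" for T
      using card_mono[OF finite_vset that] by (simp add: resident_count_def vset_def)
  qed (rule resident_count_drift[OF assms(1-6)])
  then show ?thesis
    using assms(6) by (simp add: resident_count_def field_simps)
qed

theorem theorem9:
  fixes n :: nat and E :: "nat \<Rightarrow> nat \<Rightarrow> bool" and c r :: real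
  assumes "n > 5"
    and "undirected_graph_on n E"
    and "connected_graph n E"
    and "\<forall>x y. E x y \<longrightarrow> wR n E x y / wR n E y x \<le> c"
    and "r \<ge> 2 * c * (1 + 2 / (real n - 5))"
  shows "(\<forall>S \<subseteq> vset n. exp_abs_time n (wR n E) (wM n) r S
            \<le> ennreal (r / (r - c) * real n * (real n - real (card S))))
         \<and> exp_abs_time_uniform n (wR n E) (wM n) r \<le> ennreal (r / (r - c) * (real n)^2)"
proof -
  obtain y where "E 0 y"
    using connected_graph_has_edge[OF assms(3)] assms(1) by force
  then have "1 \<le> c"
    using ratio_bound_ge_1 assms(2,4) by blast
  moreover have "2 * c \<le> 2 * c * (1 + 2 / (real n - 5))"
    using \<open>1 \<le> c\<close> assms(1) by simp
  ultimately have "c < r"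
    using assms(5) by linarith
  note bound = exp_abs_time_le[OF assms(1,2,4) \<open>1 \<le> c\<close> assms(5) \<open>c < r\<close>]
  have "r / (r - c) * real n * (real n - 1) \<le> r / (r - c) * real n * real n"
    using \<open>c < r\<close> \<open>1 \<le> c\<close> by (intro mult_left_mono) auto
  then have "exp_abs_time n (wR n E) (wM n) r {v} \<le> ennreal (r / (r - c) * (real n)^2)"
    if "v \<in> vset n" for v
    using bound[of "{v}"] that by (simp add: power2_eq_square order.trans ennreal_leI)
  then show ?thesis
    using bound assms(1) exp_abs_time_uniform_le by simp
qed

end
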